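(* Let $G$, $Z=\langle z\rangle$, $g_1,\dots,g_{2r}$, $S$ and $\Gamma=\mathrm{Cay}(G,S)$ be as in the context. Then $\Gamma$ is a $2$-arc-transitive cover of the $2r$-dimensional hypercube $\Sigma=\mathrm{Cay}(G/Z,\{Zg_1,\dots,Zg_{2r}\})$: the normal quotient $\Gamma_Z$ of $\Gamma$ with respect to the right-multiplication action of $Z$ is isomorphic to $\Sigma$, and $\Gamma$ and $\Gamma_Z$ both have valency $2r$.
   Context: Let $r\ge1$ and $G$ an extraspecial $2$-group of order $2^{2r+1}$ (i.e. $|Z(G)|=2$, $G/Z(G)\cong\mathbb{Z}_2^{2r}$), $Z=Z(G)=\langle z\rangle$ identified with $\mathbb{F}_2$, and $G/Z$ equipped with the quadratic form $Q(Zx)=x^2$ and bilinear form $B(Zx,Zy)=[x,y]$. Assume $\{Zg_1,\dots,Zg_{2r}\}$ is a symmetric basis of $G/Z$ ($Q(Zg_i)=0$, $B(Zg_i,Zg_j)=1$ for $i\ne j$); $S=\{g_1,\dots,g_{2r}\}$; $\mathrm{Cay}(H,T)$ has vertex set $H$ and edges $\{x,tx\}$. For $N\le\mathrm{Aut}(\Gamma)$ the normal quotient $\Gamma_N$ has the $N$-orbits as vertices, two orbits adjacent iff some edge of $\Gamma$ joins them; $\Gamma$ is a cover of $\Gamma_N$ if the valencies coincide. $\Gamma$ is $2$-arc-transitive if $\mathrm{Aut}(\Gamma)$ is transitive on triples $(u,v,w)$ with $u\sim v\sim w$, $u\ne w$. *)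

theory Defs
  imports "HOL-Algebra.Algebra"
begin

definition group_center :: "('a, 'b) monoid_scheme \<Rightarrow> 'a set" where
  "group_center G = {x \<in> carrier G. \<forall>y \<in> carrier G. x \<otimes>\<^bsub>G\<^esub> y = y \<otimes>\<^bsub>G\<^esub> x}"

definition commutator :: "('a, 'b) monoid_scheme \<Rightarrow> 'a \<Rightarrow> 'a \<Rightarrow> 'a" where
  "commutator G x y = inv\<^bsub>G\<^esub> x \<otimes>\<^bsub>G\<^esub> inv\<^bsub>G\<^esub> y \<otimes>\<^bsub>G\<^esub> x \<otimes>\<^bsub>G\<^esub> y"

text \<open>Undirected graphs: a vertex set together with a set of edges, each edge being
  a set {u,v} of vertices (a loop would be a singleton).\<close>
type_synonym 'v graph = "'v set \<times> 'v set set"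

definition verts :: "'v graph \<Rightarrow> 'v set" where "verts \<Gamma> = fst \<Gamma>"
definition edges :: "'v graph \<Rightarrow> 'v set set" where "edges \<Gamma> = snd \<Gamma>"

definition cayley_graph :: "('a, 'b) monoid_scheme \<Rightarrow> 'a set \<Rightarrow> 'a graph" where
  "cayley_graph H T = (carrier H, {{x, t \<otimes>\<^bsub>H\<^esub> x} | x t. x \<in> carrier H \<and> t \<in> T})"

definition neighbours :: "'v graph \<Rightarrow> 'v \<Rightarrow> 'v set" where
  "neighbours \<Gamma> v = {u \<in> verts \<Gamma>. {v, u} \<in> edges \<Gamma>}"

definition regular_of_valency :: "'v graph \<Rightarrow> nat \<Rightarrow> bool" where
  "regular_of_valency \<Gamma> k \<longleftrightarrow> (\<forall>v \<in> verts \<Gamma>. card (neighbours \<Gamma> v) = k)"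

definition graph_aut :: "'v graph \<Rightarrow> ('v \<Rightarrow> 'v) set" where
  "graph_aut \<Gamma> = {f. bij_betw f (verts \<Gamma>) (verts \<Gamma>) \<and>
     (\<forall>u \<in> verts \<Gamma>. \<forall>v \<in> verts \<Gamma>. {u, v} \<in> edges \<Gamma> \<longleftrightarrow> {f u, f v} \<in> edges \<Gamma>)}"

definition graph_iso :: "'v graph \<Rightarrow> 'w graph \<Rightarrow> bool" where
  "graph_iso \<Gamma> \<Delta> \<longleftrightarrow> (\<exists>f. bij_betw f (verts \<Gamma>) (verts \<Delta>) \<and>
     (\<forall>u \<in> verts \<Gamma>. \<forall>v \<in> verts \<Gamma>. {u, v} \<in> edges \<Gamma> \<longleftrightarrow> {f u, f v} \<in> edges \<Delta>))"

definition two_arcs :: "'v graph \<Rightarrow> ('v \<times> 'v \<times> 'v) set" where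
  "two_arcs \<Gamma> = {(u, v, w). u \<in> verts \<Gamma> \<and> v \<in> verts \<Gamma> \<and> w \<in> verts \<Gamma> \<and>
      {u, v} \<in> edges \<Gamma> \<and> {v, w} \<in> edges \<Gamma> \<and> u \<noteq> w}"

definition two_arc_transitive :: "'v graph \<Rightarrow> bool" where
  "two_arc_transitive \<Gamma> \<longleftrightarrow>
     (\<forall>(u, v, w) \<in> two_arcs \<Gamma>. \<forall>(u', v', w') \<in> two_arcs \<Gamma>.
        \<exists>f \<in> graph_aut \<Gamma>. f u = u' \<and> f v = v' \<and> f w = w')"

definition orbits :: "('v \<Rightarrow> 'v) set \<Rightarrow> 'v set \<Rightarrow> 'v set set" where
  "orbits N V = {(\<lambda>n. n x) ` N | x. x \<in> V}"

definition normal_quotient :: "'v graph \<Rightarrow> ('v \<Rightarrow> 'v) set \<Rightarrow> 'v set graph" where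
  "normal_quotient \<Gamma> N = (orbits N (verts \<Gamma>),
     {{B, C} | B C. B \<in> orbits N (verts \<Gamma>) \<and> C \<in> orbits N (verts \<Gamma>) \<and>
        (\<exists>u \<in> B. \<exists>v \<in> C. {u, v} \<in> edges \<Gamma>)})"

definition right_mult_perms :: "('a, 'b) monoid_scheme \<Rightarrow> 'a set \<Rightarrow> ('a \<Rightarrow> 'a) set" where
  "right_mult_perms G K = {(\<lambda>x. x \<otimes>\<^bsub>G\<^esub> n) | n. n \<in> K}"

end

theory Submission
  imports Defs
begin

(*
  Write Z = {1, z}. The g_i are involutions that pairwise anticommute up to the central
  involution z, so every element of G can be written as z^a g_k1 ... g_km with k1 < ... < km,
  and the product of two such words is again such a word, with an index set and a sign that
  depend only on the index sets of the factors (one factor z per inversion). Independence of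
  the cosets Z g_i makes these normal forms unique, and counting (2^(2r+1) of them) makes
  them exhaustive. Hence every permutation of the indices induces an automorphism
  g_i |-> g_(sigma i) of G. Right translations are automorphisms of every Cayley graph, so a
  2-arc (g_a v, v, g_b v) is moved to (g_a' v', v', g_b' v') by translating v to 1, permuting
  a |-> a', b |-> b', and translating 1 to v'. The orbits of right multiplication by Z are the
  cosets Z x, and Z x, Z y are joined in the quotient exactly when Z y = Z g_i Z x, so the
  normal quotient is literally Cay(G/Z, {Z g_i}); both graphs have valency 2r because the
  g_i, and the cosets Z g_i, are pairwise distinct.
*)

lemma bij_betw_two_points:
  assumes "a \<in> A" "b \<in> A" "a \<noteq> b" "a' \<in> A" "b' \<in> A" "a' \<noteq> b'"
  shows "\<exists>\<sigma>. bij_betw \<sigma> A A \<and> \<sigma> a = a' \<and> \<sigma> b = b'"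
proof -
  define c where "c = Transposition.transpose a a' b"
  have c: "c \<in> A" "a' \<noteq> c"
    using assms by (auto simp: c_def Transposition.transpose_def)
  define \<sigma> where "\<sigma> = Transposition.transpose c b' \<circ> Transposition.transpose a a'"
  have "bij_betw \<sigma> A A"
    unfolding \<sigma>_def using assms c by (intro bij_betw_trans[of _ A A]) auto
  moreover have "\<sigma> a = a'" "\<sigma> b = b'"
    using assms(6) c(2) by (simp_all add: \<sigma>_def c_def)
  ultimately show ?thesis by blast
qed

lemma graph_aut_comp:
  assumes "f \<in> graph_aut \<Gamma>" "f' \<in> graph_aut \<Gamma>"
  shows "f \<circ> f' \<in> graph_aut \<Gamma>"
proof -
  have "bij_betw f' (verts \<Gamma>) (verts \<Gamma>)" "bij_betw f (verts \<Gamma>) (verts \<Gamma>)"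
    using assms by (simp_all add: graph_aut_def)
  moreover have "\<And>u. u \<in> verts \<Gamma> \<Longrightarrow> f' u \<in> verts \<Gamma>"
    using calculation(1) bij_betwE by blast
  ultimately show ?thesis
    using assms unfolding graph_aut_def by (auto intro: bij_betw_trans[of f' _ "verts \<Gamma>"])
qed

lemma graph_iso_refl: "graph_iso \<Gamma> \<Gamma>"
  unfolding graph_iso_def by (intro exI[of _ id]) simp

lemma comm_group_product_group:
  assumes "\<And>i. i \<in> I \<Longrightarrow> comm_group (G i)"
  shows "comm_group (product_group I G)"
proof (rule group.group_comm_groupI)
  show "group (product_group I G)"
    using assms comm_group.axioms(2) by (intro product_group) blast
  fix x y assume "x \<in> carrier (product_group I G)" "y \<in> carrier (product_group I G)"
  then show "x \<otimes>\<^bsub>product_group I G\<^esub> y = y \<otimes>\<^bsub>product_group I G\<^esub> x"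
    using assms comm_monoid.m_comm[OF comm_group.axioms(1)] by (fastforce simp: PiE_iff)
qed

section \<open>Cayley graphs with involutive connection sets\<close>

lemma verts_cayley_graph [simp]: "verts (cayley_graph H T) = carrier H"
  by (simp add: cayley_graph_def verts_def)

lemma edges_cayley_graph: "edges (cayley_graph H T) = {{x, t \<otimes>\<^bsub>H\<^esub> x} | x t. x \<in> carrier H \<and> t \<in> T}"
  by (simp add: cayley_graph_def edges_def)

locale involutive_cayley = group H for H (structure) +
  fixes T :: "'a set"
  assumes gens_carrier: "T \<subseteq> carrier H"
    and gens_involutive: "\<And>t. t \<in> T \<Longrightarrow> t \<otimes> t = \<one>"
begin

lemma gen_carrier [simp, intro]: "t \<in> T \<Longrightarrow> t \<in> carrier H"
  using gens_carrier by blast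

lemma edge_iff:
  assumes "u \<in> carrier H" "v \<in> carrier H"
  shows "{u, v} \<in> edges (cayley_graph H T) \<longleftrightarrow> (\<exists>t\<in>T. v = t \<otimes> u)"
proof
  assume "{u, v} \<in> edges (cayley_graph H T)"
  then obtain x t where xt: "{u, v} = {x, t \<otimes> x}" "x \<in> carrier H" "t \<in> T"
    by (auto simp: edges_cayley_graph)
  have "t \<otimes> (t \<otimes> x) = x"
    using xt gens_involutive[OF xt(3)] by (auto simp flip: m_assoc)
  then have "v = t \<otimes> u"
    using xt(1) by (auto simp: doubleton_eq_iff)
  then show "\<exists>t\<in>T. v = t \<otimes> u"
    using xt(3) by blast
next
  assume "\<exists>t\<in>T. v = t \<otimes> u"
  with assms(1) show "{u, v} \<in> edges (cayley_graph H T)"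
    unfolding edges_cayley_graph by blast
qed

lemma neighbours_eq:
  assumes x: "x \<in> carrier H"
  shows "neighbours (cayley_graph H T) x = (\<lambda>t. t \<otimes> x) ` T"
proof -
  have "{x, v} \<in> edges (cayley_graph H T) \<longleftrightarrow> (\<exists>t\<in>T. v = t \<otimes> x)" if "v \<in> carrier H" for v
    using edge_iff[OF x that] .
  then have "neighbours (cayley_graph H T) x = {v \<in> carrier H. \<exists>t\<in>T. v = t \<otimes> x}"
    unfolding neighbours_def verts_cayley_graph by blast
  also have "\<dots> = (\<lambda>t. t \<otimes> x) ` T"
    using x by auto
  finally show ?thesis .
qed

lemma regular: "regular_of_valency (cayley_graph H T) (card T)"
  unfolding regular_of_valency_def
proof
  fix x assume "x \<in> verts (cayley_graph H T)"
  then have x: "x \<in> carrier H" by simp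
  have "inj_on (\<lambda>t. t \<otimes> x) T"
    using x by (intro inj_onI) simp
  then show "card (neighbours (cayley_graph H T) x) = card T"
    by (simp add: neighbours_eq[OF x] card_image)
qed

lemma right_mult_in_graph_aut:
  assumes c: "c \<in> carrier H"
  shows "(\<lambda>x. x \<otimes> c) \<in> graph_aut (cayley_graph H T)"
  unfolding graph_aut_def
proof (intro CollectI conjI ballI)
  show "bij_betw (\<lambda>x. x \<otimes> c) (verts (cayley_graph H T)) (verts (cayley_graph H T))"
    by (rule bij_betwI[where g="\<lambda>x. x \<otimes> inv c"]) (use c in \<open>auto simp: m_assoc\<close>)
  fix u v assume "u \<in> verts (cayley_graph H T)" "v \<in> verts (cayley_graph H T)"
  then have u: "u \<in> carrier H" and v: "v \<in> carrier H" by auto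
  have "v = t \<otimes> u \<longleftrightarrow> v \<otimes> c = t \<otimes> (u \<otimes> c)" if "t \<in> T" for t
  proof -
    have "t \<otimes> (u \<otimes> c) = (t \<otimes> u) \<otimes> c"
      using u c that by (simp add: m_assoc)
    then show ?thesis
      using u v c that by simp
  qed
  then have "(\<exists>t\<in>T. v = t \<otimes> u) \<longleftrightarrow> (\<exists>t\<in>T. v \<otimes> c = t \<otimes> (u \<otimes> c))"
    by blast
  then show "{u, v} \<in> edges (cayley_graph H T) \<longleftrightarrow> {u \<otimes> c, v \<otimes> c} \<in> edges (cayley_graph H T)"
    using u v c by (simp add: edge_iff)
qed

lemma iso_in_graph_aut:
  assumes \<alpha>: "\<alpha> \<in> iso H H" and T: "\<alpha> ` T = T"
  shows "\<alpha> \<in> graph_aut (cayley_graph H T)"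
  unfolding graph_aut_def
proof (intro CollectI conjI ballI)
  have hom: "\<alpha> \<in> hom H H" and bij: "bij_betw \<alpha> (carrier H) (carrier H)"
    using \<alpha> by (auto simp: iso_def)
  then show "bij_betw \<alpha> (verts (cayley_graph H T)) (verts (cayley_graph H T))" by simp
  fix u v assume "u \<in> verts (cayley_graph H T)" "v \<in> verts (cayley_graph H T)"
  then have u: "u \<in> carrier H" and v: "v \<in> carrier H" by auto
  have inj: "inj_on \<alpha> (carrier H)" using bij bij_betw_imp_inj_on by blast
  have "v = t \<otimes> u \<longleftrightarrow> \<alpha> v = \<alpha> t \<otimes> \<alpha> u" if "t \<in> T" for t
  proof -
    have t: "t \<in> carrier H" using that by blast
    have "\<alpha> (t \<otimes> u) = \<alpha> t \<otimes> \<alpha> u" using hom t u by (simp add: hom_mult)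
    moreover have "\<alpha> v = \<alpha> (t \<otimes> u) \<longleftrightarrow> v = t \<otimes> u"
      using inj t u v by (simp add: inj_on_eq_iff)
    ultimately show ?thesis by simp
  qed
  then have "(\<exists>t\<in>T. v = t \<otimes> u) \<longleftrightarrow> (\<exists>t\<in>\<alpha> ` T. \<alpha> v = t \<otimes> \<alpha> u)"
    by (simp cong: bex_cong)
  moreover have "\<alpha> u \<in> carrier H" "\<alpha> v \<in> carrier H"
    using hom u v by (simp_all add: hom_in_carrier)
  ultimately show "{u, v} \<in> edges (cayley_graph H T) \<longleftrightarrow> {\<alpha> u, \<alpha> v} \<in> edges (cayley_graph H T)"
    using u v T by (simp add: edge_iff)
qed

end

section \<open>Normal forms in groups generated by anticommuting involutions\<close>

text \<open>A pair \<open>(K, a)\<close> encodes the word \<open>z\<^sup>a h\<^sub>k\<^sub>1 \<cdots> h\<^sub>k\<^sub>m\<close>, where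
  \<open>k\<^sub>1 < \<dots> < k\<^sub>m\<close> enumerate \<open>K\<close>; \<open>nf_mult\<close> is the multiplication law of such words,
  sorting the concatenation costs one \<open>z\<close> per inversion.\<close>

definition inversions :: "nat set \<Rightarrow> nat set \<Rightarrow> nat" where
  "inversions K L = (\<Sum>i\<in>K. card {j\<in>L. j < i})"

definition nf_mult :: "nat set \<times> bool \<Rightarrow> nat set \<times> bool \<Rightarrow> nat set \<times> bool" where
  "nf_mult p q = (sym_diff (fst p) (fst q), (snd p \<noteq> snd q) \<noteq> odd (inversions (fst p) (fst q)))"

locale anticommuting_involutions = group G for G (structure) +
  fixes z :: 'a and h :: "nat \<Rightarrow> 'a" and n :: nat
  assumes z_carrier [simp]: "z \<in> carrier G"
    and z_central: "x \<in> carrier G \<Longrightarrow> z \<otimes> x = x \<otimes> z"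
    and z_involutive: "z \<otimes> z = \<one>"
    and gen_carrier [simp]: "i < n \<Longrightarrow> h i \<in> carrier G"
    and gen_involutive: "i < n \<Longrightarrow> h i \<otimes> h i = \<one>"
    and gen_anticommute: "i < n \<Longrightarrow> j < n \<Longrightarrow> i \<noteq> j \<Longrightarrow> h i \<otimes> h j = z \<otimes> (h j \<otimes> h i)"
begin

definition z_sign :: "bool \<Rightarrow> 'a" where
  "z_sign b = (if b then z else \<one>)"

definition monomial :: "nat set \<Rightarrow> 'a" where
  "monomial K = foldr (\<lambda>i x. h i \<otimes> x) (sorted_list_of_set K) \<one>"

definition normal_form :: "nat set \<times> bool \<Rightarrow> 'a" where
  "normal_form p = z_sign (snd p) \<otimes> monomial (fst p)"

lemma z_sign_carrier [simp]: "z_sign b \<in> carrier G"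
  by (simp add: z_sign_def)

lemma z_sign_xor: "z_sign (a \<noteq> b) = z_sign a \<otimes> z_sign b"
  using z_involutive by (auto simp: z_sign_def)

lemma z_sign_left_commute:
  "x \<in> carrier G \<Longrightarrow> y \<in> carrier G \<Longrightarrow> x \<otimes> (z_sign b \<otimes> y) = z_sign b \<otimes> (x \<otimes> y)"
  using z_central by (auto simp: z_sign_def simp flip: m_assoc)

lemma monomial_empty [simp]: "monomial {} = \<one>"
  by (simp add: monomial_def)

lemma monomial_insert_min:
  assumes "finite K" "\<forall>k\<in>K. m < k"
  shows "monomial (insert m K) = h m \<otimes> monomial K"
proof -
  have "Min (insert m K) = m"
    using assms by (intro Min_eqI) auto
  moreover have "insert m K - {m} = K"
    using assms(2) by auto
  ultimately have "sorted_list_of_set (insert m K) = m # sorted_list_of_set K"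
    using sorted_list_of_set_nonempty[of "insert m K"] assms(1) by simp
  then show ?thesis
    by (simp add: monomial_def)
qed

lemma monomial_carrier [simp]:
  assumes "K \<subseteq> {..<n}"
  shows "monomial K \<in> carrier G"
proof -
  have "finite K" using assms finite_subset by blast
  then show ?thesis using assms
    by (induction K rule: finite_linorder_min_induct) (simp_all add: monomial_insert_min)
qed

lemma monomial_singleton: "i < n \<Longrightarrow> monomial {i} = h i"
  using monomial_insert_min[of "{}" i] by simp

lemma normal_form_carrier [simp]: "fst p \<subseteq> {..<n} \<Longrightarrow> normal_form p \<in> carrier G"
  by (simp add: normal_form_def)

lemma normal_form_gen: "i < n \<Longrightarrow> normal_form ({i}, False) = h i"
  by (simp add: normal_form_def z_sign_def monomial_singleton)

lemma normal_form_z: "normal_form ({}, True) = z"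
  by (simp add: normal_form_def z_sign_def)

lemma z_sign_Not: "z_sign (\<not> b) = z \<otimes> z_sign b"
  using z_involutive by (simp add: z_sign_def)

lemma gen_mult_monomial:
  assumes m: "m < n" and K: "K \<subseteq> {..<n}"
  shows "h m \<otimes> monomial K = z_sign (odd (card {k\<in>K. k < m})) \<otimes> monomial (sym_diff {m} K)"
proof -
  have "finite K" using K finite_subset by blast
  then show ?thesis using K
  proof (induction K rule: finite_linorder_min_induct)
    case empty
    then show ?case
      using m by (simp add: z_sign_def monomial_singleton)
  next
    case (insert k K)
    have K: "K \<subseteq> {..<n}" and k: "k < n"
      using insert.prems by auto
    have M: "monomial (insert k K) = h k \<otimes> monomial K"
      using monomial_insert_min insert.hyps by blast
    consider "m < k" | "m = k" | "k < m" by linarith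
    then show ?case
    proof cases
      case 1
      then have gt: "\<forall>j\<in>insert k K. m < j"
        using insert.hyps(2) by auto
      then have card0: "card {j \<in> insert k K. j < m} = 0"
        and sd: "sym_diff {m} (insert k K) = insert m (insert k K)"
        by (auto simp: card_eq_0_iff)
      have "h m \<otimes> monomial (insert k K) = monomial (sym_diff {m} (insert k K))"
        unfolding sd using monomial_insert_min gt insert.hyps(1) by simp
      moreover have "sym_diff {m} (insert k K) \<subseteq> {..<n}"
        using m insert.prems by auto
      ultimately show ?thesis
        unfolding card0 by (simp add: z_sign_def)
    next
      case 2
      then have card0: "card {j \<in> insert k K. j < m} = 0"
        and sd: "sym_diff {m} (insert k K) = K"
        using insert.hyps(2) by (auto simp: card_eq_0_iff)
      have "h k \<otimes> (h k \<otimes> monomial K) = monomial K"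
        using k K gen_involutive[OF k] by (simp flip: m_assoc)
      then show ?thesis
        unfolding card0 sd using 2 M K by (simp add: z_sign_def)
    next
      case 3
      define c where "c = card {j \<in> K. j < m}"
      have "{j \<in> insert k K. j < m} = insert k {j \<in> K. j < m}" "k \<notin> K"
        using 3 insert.hyps(2) by auto
      then have c: "card {j \<in> insert k K. j < m} = Suc c"
        using insert.hyps(1) by (simp add: c_def)
      have sd: "sym_diff {m} (insert k K) = insert k (sym_diff {m} K)"
        using 3 insert.hyps(2) by auto
      have M': "monomial (sym_diff {m} (insert k K)) = h k \<otimes> monomial (sym_diff {m} K)"
        unfolding sd using 3 insert.hyps by (intro monomial_insert_min) auto
      have sdK: "sym_diff {m} K \<subseteq> {..<n}"
        using K m by auto
      have "h m \<otimes> monomial (insert k K) = (h m \<otimes> h k) \<otimes> monomial K"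
        using M m k K by (simp add: m_assoc)
      also have "\<dots> = z \<otimes> (h k \<otimes> (h m \<otimes> monomial K))"
        using gen_anticommute[OF m k] 3 m k K by (simp add: m_assoc)
      also have "\<dots> = z \<otimes> (h k \<otimes> (z_sign (odd c) \<otimes> monomial (sym_diff {m} K)))"
        using insert.IH K by (simp add: c_def)
      also have "\<dots> = (z \<otimes> z_sign (odd c)) \<otimes> (h k \<otimes> monomial (sym_diff {m} K))"
        using k sdK by (simp add: z_sign_left_commute m_assoc)
      also have "\<dots> = z_sign (odd (card {j \<in> insert k K. j < m})) \<otimes> monomial (sym_diff {m} (insert k K))"
        by (simp only: c M' even_Suc z_sign_Not)
      finally show ?thesis .
    qed
  qed
qed

lemma monomial_mult:
  assumes K: "K \<subseteq> {..<n}" and L: "L \<subseteq> {..<n}"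
  shows "monomial K \<otimes> monomial L = z_sign (odd (inversions K L)) \<otimes> monomial (sym_diff K L)"
proof -
  have "finite K" using K finite_subset by blast
  then show ?thesis using K
  proof (induction K rule: finite_linorder_min_induct)
    case empty
    then show ?case
      using L by (simp add: inversions_def z_sign_def)
  next
    case (insert m K)
    have K: "K \<subseteq> {..<n}" and m: "m < n"
      using insert.prems by auto
    have sdKL: "sym_diff K L \<subseteq> {..<n}"
      using K L by auto
    have "m \<notin> K"
      using insert.hyps(2) by auto
    then have inv: "inversions (insert m K) L = card {j \<in> L. j < m} + inversions K L"
      using insert.hyps(1) by (simp add: inversions_def)
    have "{j \<in> sym_diff K L. j < m} = {j \<in> L. j < m}" "sym_diff {m} (sym_diff K L) = sym_diff (insert m K) L"
      using insert.hyps(2) \<open>m \<notin> K\<close> by auto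
    then have gen: "h m \<otimes> monomial (sym_diff K L)
        = z_sign (odd (card {j \<in> L. j < m})) \<otimes> monomial (sym_diff (insert m K) L)"
      using gen_mult_monomial[OF m sdKL] by simp
    have "monomial (insert m K) \<otimes> monomial L = h m \<otimes> (monomial K \<otimes> monomial L)"
      using monomial_insert_min[OF insert.hyps(1,2)] m K L by (simp add: m_assoc)
    also have "\<dots> = z_sign (odd (inversions K L)) \<otimes> (h m \<otimes> monomial (sym_diff K L))"
      using insert.IH K m sdKL by (simp add: z_sign_left_commute)
    also have "\<dots> = (z_sign (odd (inversions K L)) \<otimes> z_sign (odd (card {j \<in> L. j < m})))
        \<otimes> monomial (sym_diff (insert m K) L)"
    proof -
      have "sym_diff (insert m K) L \<subseteq> {..<n}"
        using insert.prems L by auto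
      then show ?thesis
        using gen m K L by (simp add: m_assoc)
    qed
    also have "\<dots> = z_sign (odd (inversions (insert m K) L)) \<otimes> monomial (sym_diff (insert m K) L)"
    proof -
      have "odd (inversions (insert m K) L) = (odd (inversions K L) \<noteq> odd (card {j \<in> L. j < m}))"
        using inv by auto
      then show ?thesis
        by (simp only: z_sign_xor)
    qed
    finally show ?case .
  qed
qed

lemma normal_form_mult:
  assumes "fst p \<subseteq> {..<n}" "fst q \<subseteq> {..<n}"
  shows "normal_form p \<otimes> normal_form q = normal_form (nf_mult p q)"
proof -
  obtain K a L b where pq: "p = (K, a)" "q = (L, b)"
    by fastforce
  have K: "K \<subseteq> {..<n}" and L: "L \<subseteq> {..<n}"
    using assms pq by auto
  then have KL: "sym_diff K L \<subseteq> {..<n}"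
    by auto
  have "normal_form p \<otimes> normal_form q = z_sign a \<otimes> (monomial K \<otimes> (z_sign b \<otimes> monomial L))"
    using K L pq by (simp add: normal_form_def m_assoc)
  also have "\<dots> = z_sign a \<otimes> z_sign b \<otimes> (monomial K \<otimes> monomial L)"
    using K L by (simp add: z_sign_left_commute[of "monomial K"] m_assoc)
  also have "\<dots> = z_sign a \<otimes> z_sign b \<otimes> z_sign (odd (inversions K L)) \<otimes> monomial (sym_diff K L)"
    using K L KL by (simp add: monomial_mult m_assoc)
  also have "\<dots> = normal_form (nf_mult p q)"
    unfolding pq by (simp only: normal_form_def nf_mult_def prod.sel z_sign_xor)
  finally show ?thesis .
qed

lemma hom_fixing_gens_fixes_normal_form:
  assumes f: "f \<in> hom G G" and fh: "\<forall>i<n. f (h i) = h i" and fz: "f z = z"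
    and p: "fst p \<subseteq> {..<n}"
  shows "f (normal_form p) = normal_form p"
proof -
  have "f (monomial K) = monomial K" if K: "K \<subseteq> {..<n}" for K
  proof -
    have "finite K" using K finite_subset by blast
    then show ?thesis using K
    proof (induction K rule: finite_linorder_min_induct)
      case empty
      then show ?case using f hom_one[OF f is_group is_group] by simp
    next
      case (insert m K)
      then show ?case using f fh by (simp add: monomial_insert_min hom_mult)
    qed
  qed
  moreover have "f (z_sign b) = z_sign b" for b
    using fz hom_one[OF f is_group is_group] by (simp add: z_sign_def)
  ultimately show ?thesis
    using f p by (simp add: normal_form_def hom_mult)
qed

lemma reindex:
  assumes "\<sigma> ` {..<n} \<subseteq> {..<n}" "inj_on \<sigma> {..<n}"
  shows "anticommuting_involutions G z (h \<circ> \<sigma>) n"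
proof (rule anticommuting_involutions.intro[OF is_group])
  show "anticommuting_involutions_axioms G z (h \<circ> \<sigma>) n"
  proof
    show "z \<in> carrier G" "z \<otimes> z = \<one>"
      by (simp_all add: z_involutive)
    show "\<And>x. x \<in> carrier G \<Longrightarrow> z \<otimes> x = x \<otimes> z"
      by (rule z_central)
  next
    fix i assume "i < n"
    then have "\<sigma> i < n"
      using assms(1) by blast
    then show "(h \<circ> \<sigma>) i \<in> carrier G" "(h \<circ> \<sigma>) i \<otimes> (h \<circ> \<sigma>) i = \<one>"
      by (simp_all add: gen_involutive)
  next
    fix i j assume "i < n" "j < n" "i \<noteq> j"
    then have "\<sigma> i < n" "\<sigma> j < n" "\<sigma> i \<noteq> \<sigma> j"
      using assms by (auto dest: inj_onD)
    then show "(h \<circ> \<sigma>) i \<otimes> (h \<circ> \<sigma>) j = z \<otimes> ((h \<circ> \<sigma>) j \<otimes> (h \<circ> \<sigma>) i)"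
      unfolding comp_apply by (rule gen_anticommute)
  qed
qed

section \<open>The normal quotient by the subgroup generated by \<open>z\<close>\<close>

abbreviation Z :: "'a set" where
  "Z \<equiv> {\<one>, z}"

lemma inv_z [simp]: "inv z = z"
  using inv_equality[OF z_involutive] by simp

lemma subgroup_Z: "subgroup Z G"
proof (rule subgroupI)
  fix a b assume "a \<in> Z" "b \<in> Z"
  then show "inv a \<in> Z" "a \<otimes> b \<in> Z"
    using z_involutive by auto
qed simp_all

lemma normal_Z: "Z \<lhd> G"
  unfolding normal_inv_iff
proof (intro conjI subgroup_Z ballI)
  fix x y assume x: "x \<in> carrier G" and y: "y \<in> Z"
  have "x \<otimes> z \<otimes> inv x = z \<otimes> x \<otimes> inv x"
    by (simp only: z_central[OF x])
  also have "\<dots> = z"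
    using x by (simp add: m_assoc)
  finally show "x \<otimes> y \<otimes> inv x \<in> Z"
    using x y by auto
qed

lemma r_coset_Z: "x \<in> carrier G \<Longrightarrow> Z #> x = {x, z \<otimes> x}"
  unfolding r_coset_def by auto

lemma Z_coset_z_sign: "x \<in> carrier G \<Longrightarrow> Z #> (z_sign b \<otimes> x) = Z #> x"
  using z_involutive by (auto simp: r_coset_Z z_sign_def simp flip: m_assoc)

lemma Z_coset_normal_form: "fst p \<subseteq> {..<n} \<Longrightarrow> Z #> normal_form p = Z #> monomial (fst p)"
  by (simp add: normal_form_def Z_coset_z_sign)

lemma Z_coset_mult: "x \<in> carrier G \<Longrightarrow> y \<in> carrier G \<Longrightarrow> (Z #> x) <#> (Z #> y) = Z #> (x \<otimes> y)"
  by (rule normal.rcos_sum[OF normal_Z])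

lemma Z_coset_carrier: "x \<in> carrier G \<Longrightarrow> Z #> x \<in> carrier (G Mod Z)"
  by (auto simp: carrier_FactGroup)

lemma Z_coset_monomial_mult:
  assumes "K \<subseteq> {..<n}" "L \<subseteq> {..<n}"
  shows "(Z #> monomial K) <#> (Z #> monomial L) = Z #> monomial (sym_diff K L)"
proof -
  have "sym_diff K L \<subseteq> {..<n}"
    using assms by auto
  then show ?thesis
    using assms by (simp add: Z_coset_mult monomial_mult Z_coset_z_sign)
qed

lemma Z_coset_monomial_square:
  assumes "K \<subseteq> {..<n}"
  shows "(Z #> monomial K) <#> (Z #> monomial K) = Z"
  using Z_coset_monomial_mult[OF assms assms] subgroup.subset[OF subgroup_Z] by simp

lemma finprod_Z_cosets:
  assumes comm: "comm_group (G Mod Z)" and K: "K \<subseteq> {..<n}"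
  shows "finprod (G Mod Z) (\<lambda>i. Z #> h i) K = Z #> monomial K"
proof -
  interpret Q: comm_group "G Mod Z" by (fact comm)
  have "finite K" using K finite_subset by blast
  then show ?thesis using K
  proof (induction K rule: finite_linorder_min_induct)
    case empty
    then show ?case
      using subgroup.subset[OF subgroup_Z] by simp
  next
    case (insert m K)
    then have m: "m < n" and K: "K \<subseteq> {..<n}" and "m \<notin> K"
      by auto
    have "(\<lambda>i. Z #> h i) \<in> K \<rightarrow> carrier (G Mod Z)"
      using K by (intro Pi_I Z_coset_carrier gen_carrier) auto
    then have "finprod (G Mod Z) (\<lambda>i. Z #> h i) (insert m K)
        = (Z #> h m) <#> finprod (G Mod Z) (\<lambda>i. Z #> h i) K"
      using insert.hyps(1) \<open>m \<notin> K\<close> m by (simp add: Z_coset_carrier)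
    also have "\<dots> = Z #> monomial (insert m K)"
      using insert.IH K m insert.hyps by (simp add: Z_coset_mult monomial_insert_min)
    finally show ?case .
  qed
qed

sublocale cayley: involutive_cayley G "h ` {..<n}"
  by unfold_locales (auto simp: gen_involutive)

lemma cayley_edge_iff:
  "u \<in> carrier G \<Longrightarrow> v \<in> carrier G \<Longrightarrow>
    {u, v} \<in> edges (cayley_graph G (h ` {..<n})) \<longleftrightarrow> (\<exists>i<n. v = h i \<otimes> u)"
  by (simp add: cayley.edge_iff Bex_def lessThan_iff)

lemma orbit_right_mult_Z:
  assumes x: "x \<in> carrier G"
  shows "(\<lambda>f. f x) ` right_mult_perms G Z = Z #> x"
proof -
  have "right_mult_perms G Z = {\<lambda>y. y \<otimes> \<one>, \<lambda>y. y \<otimes> z}"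
    by (auto simp: right_mult_perms_def)
  then show ?thesis
    using x by (simp add: r_coset_Z z_central)
qed

lemma orbits_right_mult_Z: "orbits (right_mult_perms G Z) (carrier G) = carrier (G Mod Z)"
proof -
  have "orbits (right_mult_perms G Z) (carrier G) = (\<lambda>x. (\<lambda>f. f x) ` right_mult_perms G Z) ` carrier G"
    by (auto simp: orbits_def)
  also have "\<dots> = (\<lambda>x. Z #> x) ` carrier G"
    by (rule image_cong) (simp_all add: orbit_right_mult_Z)
  finally show ?thesis
    by (simp add: carrier_FactGroup)
qed

lemma Z_cosets_adjacent_iff:
  assumes B: "B \<in> carrier (G Mod Z)" and C: "C \<in> carrier (G Mod Z)"
  shows "(\<exists>u\<in>B. \<exists>v\<in>C. {u, v} \<in> edges (cayley_graph G (h ` {..<n})))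
    \<longleftrightarrow> (\<exists>i<n. C = (Z #> h i) <#> B)"
proof
  obtain x where x: "x \<in> carrier G" "B = Z #> x"
    using B by (auto simp: carrier_FactGroup)
  obtain y where y: "y \<in> carrier G" "C = Z #> y"
    using C by (auto simp: carrier_FactGroup)
  {
    assume "\<exists>u\<in>B. \<exists>v\<in>C. {u, v} \<in> edges (cayley_graph G (h ` {..<n}))"
    then obtain u v where uv: "u \<in> B" "v \<in> C" "{u, v} \<in> edges (cayley_graph G (h ` {..<n}))"
      by blast
    have u: "u \<in> carrier G" and v: "v \<in> carrier G"
      using uv x y by (auto simp: r_coset_Z)
    obtain i where i: "i < n" "v = h i \<otimes> u"
      using uv(3) cayley_edge_iff[OF u v] by blast
    have "B = Z #> u" "C = Z #> v"
      using repr_independence[OF _ _ subgroup_Z] uv x y by auto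
    then have "C = (Z #> h i) <#> B"
      using i u by (simp add: Z_coset_mult)
    then show "\<exists>i<n. C = (Z #> h i) <#> B"
      using i(1) by blast
  }
  {
    assume "\<exists>i<n. C = (Z #> h i) <#> B"
    then obtain i where i: "i < n" "C = (Z #> h i) <#> B"
      by blast
    then have "h i \<otimes> x \<in> C"
      using x rcos_self[OF _ subgroup_Z] by (simp add: Z_coset_mult)
    moreover have "x \<in> B"
      using x rcos_self[OF _ subgroup_Z] by simp
    moreover have "{x, h i \<otimes> x} \<in> edges (cayley_graph G (h ` {..<n}))"
      using i x cayley_edge_iff by auto
    ultimately show "\<exists>u\<in>B. \<exists>v\<in>C. {u, v} \<in> edges (cayley_graph G (h ` {..<n}))"
      by blast
  }
qed

lemma normal_quotient_right_mult_Z: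
  "normal_quotient (cayley_graph G (h ` {..<n})) (right_mult_perms G Z)
    = cayley_graph (G Mod Z) ((\<lambda>i. Z #> h i) ` {..<n})"
proof -
  interpret Q: group "G Mod Z"
    by (rule normal.factorgroup_is_group[OF normal_Z])
  let ?adj = "\<lambda>B C. \<exists>u\<in>B. \<exists>v\<in>C. {u, v} \<in> edges (cayley_graph G (h ` {..<n}))"
  have "{{B, C} | B C. B \<in> carrier (G Mod Z) \<and> C \<in> carrier (G Mod Z) \<and> ?adj B C}
      = {{B, t <#> B} | B t. B \<in> carrier (G Mod Z) \<and> t \<in> (\<lambda>i. Z #> h i) ` {..<n}}"
  proof (intro equalityI subsetI)
    fix e assume "e \<in> {{B, C} | B C. B \<in> carrier (G Mod Z) \<and> C \<in> carrier (G Mod Z) \<and> ?adj B C}"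
    then obtain B C where e: "e = {B, C}" "B \<in> carrier (G Mod Z)" "C \<in> carrier (G Mod Z)" "?adj B C"
      by blast
    then obtain i where "i < n" "C = (Z #> h i) <#> B"
      using Z_cosets_adjacent_iff by blast
    with e show "e \<in> {{B, t <#> B} | B t. B \<in> carrier (G Mod Z) \<and> t \<in> (\<lambda>i. Z #> h i) ` {..<n}}"
      by blast
  next
    fix e assume "e \<in> {{B, t <#> B} | B t. B \<in> carrier (G Mod Z) \<and> t \<in> (\<lambda>i. Z #> h i) ` {..<n}}"
    then obtain B i where e: "e = {B, (Z #> h i) <#> B}" "B \<in> carrier (G Mod Z)" "i < n"
      by blast
    have C: "(Z #> h i) <#> B \<in> carrier (G Mod Z)"
      using Q.m_closed[OF Z_coset_carrier e(2)] e(3) by simp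
    then have "?adj B ((Z #> h i) <#> B)"
      using Z_cosets_adjacent_iff[OF e(2) C] e(3) by blast
    with e C show "e \<in> {{B, C} | B C. B \<in> carrier (G Mod Z) \<and> C \<in> carrier (G Mod Z) \<and> ?adj B C}"
      by blast
  qed
  then show ?thesis
    unfolding normal_quotient_def verts_cayley_graph orbits_right_mult_Z
    by (simp add: cayley_graph_def[where H = "G Mod Z"])
qed

end

section \<open>Bases of anticommuting involutions\<close>

lemma (in group) anticommuting_involutionsI:
  assumes center: "group_center G = {\<one>, z}" and z_ne_one: "z \<noteq> \<one>"
    and carr: "\<And>i. i < n \<Longrightarrow> h i \<in> carrier G"
    and inv: "\<And>i. i < n \<Longrightarrow> h i \<otimes> h i = \<one>"
    and comm: "\<And>i j. i < n \<Longrightarrow> j < n \<Longrightarrow> i \<noteq> j \<Longrightarrow> commutator G (h i) (h j) = z"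
  shows "anticommuting_involutions G z h n"
proof -
  have z: "z \<in> carrier G" and z_central: "\<And>x. x \<in> carrier G \<Longrightarrow> z \<otimes> x = x \<otimes> z"
    using center unfolding group_center_def by blast+
  have "z \<otimes> z \<in> group_center G"
    unfolding group_center_def
  proof (intro CollectI conjI ballI)
    fix y assume y: "y \<in> carrier G"
    have "z \<otimes> z \<otimes> y = z \<otimes> (y \<otimes> z)"
      using z y z_central[OF y] by (simp add: m_assoc)
    also have "\<dots> = y \<otimes> (z \<otimes> z)"
      using z y z_central[OF y] by (simp flip: m_assoc)
    finally show "z \<otimes> z \<otimes> y = y \<otimes> (z \<otimes> z)" .
  qed (use z in simp)
  moreover have "z \<otimes> z \<noteq> z"
    using z z_ne_one by simp
  ultimately have zz: "z \<otimes> z = \<one>"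
    using center by blast
  have anticomm: "h i \<otimes> h j = z \<otimes> (h j \<otimes> h i)" if ij: "i < n" "j < n" "i \<noteq> j" for i j
  proof -
    have hi: "h i \<in> carrier G" "inv (h i) = h i" and hj: "h j \<in> carrier G" "inv (h j) = h j"
      using ij carr inv inv_equality by auto
    have sq: "(h i \<otimes> h j) \<otimes> (h i \<otimes> h j) = z"
      using comm[OF ij] hi hj by (simp add: commutator_def m_assoc)
    have "h i \<otimes> h j = (h i \<otimes> h j) \<otimes> (h i \<otimes> h j) \<otimes> inv (h i \<otimes> h j)"
      using hi hj by (simp add: m_assoc)
    also have "\<dots> = z \<otimes> (h j \<otimes> h i)"
      using sq hi hj by (simp add: inv_mult_group)
    finally show ?thesis .
  qed
  show ?thesis
    by (rule anticommuting_involutions.intro[OF is_group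
          anticommuting_involutions_axioms.intro[OF z z_central zz carr inv anticomm]])
qed

lemma (in anticommuting_involutions) Z_coset_monomial_inj:
  assumes comm: "comm_group (G Mod Z)"
    and indep: "\<And>I. I \<subseteq> {..<n} \<Longrightarrow> finprod (G Mod Z) (\<lambda>i. Z #> h i) I = \<one>\<^bsub>G Mod Z\<^esub> \<Longrightarrow> I = {}"
    and K: "K \<subseteq> {..<n}" and L: "L \<subseteq> {..<n}" and eq: "Z #> monomial K = Z #> monomial L"
  shows "K = L"
proof -
  have KL: "sym_diff K L \<subseteq> {..<n}"
    using K L by auto
  then have "finprod (G Mod Z) (\<lambda>i. Z #> h i) (sym_diff K L) = (Z #> monomial K) <#> (Z #> monomial L)"
    using K L by (simp add: finprod_Z_cosets[OF comm] Z_coset_monomial_mult)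
  also have "\<dots> = \<one>\<^bsub>G Mod Z\<^esub>"
    using eq Z_coset_monomial_square[OF L] by simp
  finally have "sym_diff K L = {}"
    by (rule indep[OF KL])
  then show "K = L"
    by blast
qed

locale anticommuting_basis = anticommuting_involutions +
  assumes normal_form_bij: "bij_betw normal_form (Pow {..<n} \<times> UNIV) (carrier G)"

lemma (in anticommuting_involutions) anticommuting_basisI:
  assumes fin: "finite (carrier G)" and card: "card (carrier G) = 2 ^ (n + 1)"
    and z_ne_one: "z \<noteq> \<one>" and comm: "comm_group (G Mod Z)"
    and indep: "\<And>I. I \<subseteq> {..<n} \<Longrightarrow> finprod (G Mod Z) (\<lambda>i. Z #> h i) I = \<one>\<^bsub>G Mod Z\<^esub> \<Longrightarrow> I = {}"
  shows "anticommuting_basis G z h n"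
proof -
  have inj: "inj_on normal_form (Pow {..<n} \<times> UNIV)"
  proof (rule inj_onI)
    fix p q assume p: "p \<in> Pow {..<n} \<times> UNIV" and q: "q \<in> Pow {..<n} \<times> UNIV"
      and eq: "normal_form p = normal_form q"
    obtain K a L b where pq: "p = (K, a)" "q = (L, b)"
      by fastforce
    have K: "K \<subseteq> {..<n}" and L: "L \<subseteq> {..<n}"
      using p q pq by auto
    have "Z #> monomial K = Z #> monomial L"
      using Z_coset_normal_form[of p] Z_coset_normal_form[of q] eq pq K L by simp
    then have KL: "K = L"
      using Z_coset_monomial_inj[OF comm indep K L] by blast
    then have "z_sign a = z_sign b"
      using eq pq L by (simp add: normal_form_def)
    then have "a = b"
      using z_ne_one by (auto simp: z_sign_def split: if_splits)
    with pq KL show "p = q"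
      by simp
  qed
  have "normal_form ` (Pow {..<n} \<times> UNIV) = carrier G"
  proof (rule card_subset_eq[OF fin])
    show "normal_form ` (Pow {..<n} \<times> UNIV) \<subseteq> carrier G"
      by auto
    have "card (Pow {..<n} \<times> (UNIV :: bool set)) = 2 ^ (n + 1)"
      by (simp add: card_cartesian_product card_Pow)
    then show "card (normal_form ` (Pow {..<n} \<times> UNIV)) = card (carrier G)"
      using card card_image[OF inj] by simp
  qed
  with inj show ?thesis
    by (intro anticommuting_basis.intro anticommuting_involutions_axioms anticommuting_basis_axioms.intro)
       (simp add: bij_betw_def)
qed

context anticommuting_basis
begin

lemma normal_form_inj: "inj_on normal_form (Pow {..<n} \<times> UNIV)"
  using normal_form_bij bij_betw_imp_inj_on by blast

lemma normal_form_onto: "x \<in> carrier G \<Longrightarrow> \<exists>p \<in> Pow {..<n} \<times> UNIV. x = normal_form p"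
  using normal_form_bij unfolding bij_betw_def by blast

lemma hom_fixing_gens_eq_id:
  assumes "f \<in> hom G G" "\<forall>i<n. f (h i) = h i" "f z = z" "x \<in> carrier G"
  shows "f x = x"
  using normal_form_onto[OF assms(4)] hom_fixing_gens_fixes_normal_form[OF assms(1-3)] by auto

lemma reindex_endomorphism:
  assumes \<sigma>: "\<sigma> ` {..<n} \<subseteq> {..<n}" "inj_on \<sigma> {..<n}"
  shows "\<exists>\<alpha> \<in> hom G G. (\<forall>i<n. \<alpha> (h i) = h (\<sigma> i)) \<and> \<alpha> z = z"
proof -
  interpret T: anticommuting_involutions G z "h \<circ> \<sigma>" n
    by (rule reindex[OF \<sigma>])
  define \<alpha> where "\<alpha> x = T.normal_form (inv_into (Pow {..<n} \<times> UNIV) normal_form x)" for x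
  have \<alpha>_nf: "\<alpha> (normal_form p) = T.normal_form p" if "p \<in> Pow {..<n} \<times> UNIV" for p
    using that normal_form_inj by (simp add: \<alpha>_def)
  have "\<alpha> \<in> hom G G"
  proof (rule homI)
    fix x assume "x \<in> carrier G"
    then obtain p where "p \<in> Pow {..<n} \<times> UNIV" "x = normal_form p"
      using normal_form_onto by blast
    then show "\<alpha> x \<in> carrier G"
      using \<alpha>_nf T.normal_form_carrier by auto
  next
    fix x y assume "x \<in> carrier G" "y \<in> carrier G"
    then obtain p q where p: "p \<in> Pow {..<n} \<times> UNIV" "x = normal_form p"
      and q: "q \<in> Pow {..<n} \<times> UNIV" "y = normal_form q"
      using normal_form_onto by metis
    have "nf_mult p q \<in> Pow {..<n} \<times> UNIV"
      using p q by (auto simp: nf_mult_def)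
    then show "\<alpha> (x \<otimes> y) = \<alpha> x \<otimes> \<alpha> y"
      using p q \<alpha>_nf normal_form_mult T.normal_form_mult by auto
  qed
  moreover have "\<alpha> (h i) = h (\<sigma> i)" if "i < n" for i
    using that \<alpha>_nf[of "({i}, False)"] normal_form_gen T.normal_form_gen by simp
  moreover have "\<alpha> z = z"
    using \<alpha>_nf[of "({}, True)"] normal_form_z T.normal_form_z by simp
  ultimately show ?thesis
    by blast
qed

lemma permutation_iso:
  assumes \<sigma>: "bij_betw \<sigma> {..<n} {..<n}"
  shows "\<exists>\<alpha> \<in> iso G G. \<forall>i<n. \<alpha> (h i) = h (\<sigma> i)"
proof -
  define \<tau> where "\<tau> = inv_into {..<n} \<sigma>"
  have \<tau>: "bij_betw \<tau> {..<n} {..<n}"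
    unfolding \<tau>_def using \<sigma> by (rule bij_betw_inv_into)
  have \<tau>\<sigma>: "\<tau> (\<sigma> i) = i" and \<sigma>\<tau>: "\<sigma> (\<tau> i) = i" if "i < n" for i
    using that \<sigma> by (simp_all add: \<tau>_def bij_betw_inv_into_left bij_betw_inv_into_right)
  obtain \<alpha> where \<alpha>: "\<alpha> \<in> hom G G" "\<forall>i<n. \<alpha> (h i) = h (\<sigma> i)" "\<alpha> z = z"
    using reindex_endomorphism[of \<sigma>] \<sigma> unfolding bij_betw_def by blast
  obtain \<beta> where \<beta>: "\<beta> \<in> hom G G" "\<forall>i<n. \<beta> (h i) = h (\<tau> i)" "\<beta> z = z"
    using reindex_endomorphism[of \<tau>] \<tau> unfolding bij_betw_def by blast
  have \<sigma>n: "\<sigma> i < n" and \<tau>n: "\<tau> i < n" if "i < n" for i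
    using that \<sigma> \<tau> bij_betwE by fastforce+
  have "\<forall>i<n. (\<beta> \<circ> \<alpha>) (h i) = h i" "\<forall>i<n. (\<alpha> \<circ> \<beta>) (h i) = h i"
    using \<alpha>(2) \<beta>(2) \<sigma>n \<tau>n \<tau>\<sigma> \<sigma>\<tau> by simp_all
  then have "(\<beta> \<circ> \<alpha>) x = x" "(\<alpha> \<circ> \<beta>) x = x" if "x \<in> carrier G" for x
    using hom_fixing_gens_eq_id[OF Group.hom_compose[OF \<alpha>(1) \<beta>(1)] _ _ that]
      hom_fixing_gens_eq_id[OF Group.hom_compose[OF \<beta>(1) \<alpha>(1)] _ _ that] \<alpha>(3) \<beta>(3)
    by simp_all
  then have "bij_betw \<alpha> (carrier G) (carrier G)"
    using \<alpha>(1) \<beta>(1) by (intro bij_betwI[where g = \<beta>]) (auto simp: hom_def)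
  with \<alpha> show ?thesis
    by (auto intro: isoI)
qed

lemma gen_inj: "inj_on h {..<n}"
proof (rule inj_onI)
  fix i j assume "i \<in> {..<n}" "j \<in> {..<n}" "h i = h j"
  then have "normal_form ({i}, False) = normal_form ({j}, False)"
    by (simp add: normal_form_gen)
  with \<open>i \<in> {..<n}\<close> \<open>j \<in> {..<n}\<close> show "i = j"
    using normal_form_inj by (auto dest: inj_onD)
qed

lemma regular_cayley: "regular_of_valency (cayley_graph G (h ` {..<n})) n"
  using cayley.regular card_image[OF gen_inj] by simp

lemma right_mult_perms_Z_aut: "right_mult_perms G Z \<subseteq> graph_aut (cayley_graph G (h ` {..<n}))"
  using cayley.right_mult_in_graph_aut by (auto simp: right_mult_perms_def)

lemma two_arc_transitive_cayley: "two_arc_transitive (cayley_graph G (h ` {..<n}))"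
  unfolding two_arc_transitive_def
proof clarify
  fix u v w u' v' w'
  assume "(u, v, w) \<in> two_arcs (cayley_graph G (h ` {..<n}))"
    and "(u', v', w') \<in> two_arcs (cayley_graph G (h ` {..<n}))"
  then have c: "u \<in> carrier G" "v \<in> carrier G" "w \<in> carrier G"
      "u' \<in> carrier G" "v' \<in> carrier G" "w' \<in> carrier G"
    and e: "{v, u} \<in> edges (cayley_graph G (h ` {..<n}))" "{v, w} \<in> edges (cayley_graph G (h ` {..<n}))"
      "{v', u'} \<in> edges (cayley_graph G (h ` {..<n}))" "{v', w'} \<in> edges (cayley_graph G (h ` {..<n}))"
    and ne: "u \<noteq> w" "u' \<noteq> w'"
    by (auto simp: two_arcs_def insert_commute)
  obtain a b a' b' where ab: "a < n" "u = h a \<otimes> v" "b < n" "w = h b \<otimes> v"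
      and ab': "a' < n" "u' = h a' \<otimes> v'" "b' < n" "w' = h b' \<otimes> v'"
    using e c cayley_edge_iff by meson
  have "a \<noteq> b" "a' \<noteq> b'"
    using ab ab' ne by auto
  then obtain \<sigma> where \<sigma>: "bij_betw \<sigma> {..<n} {..<n}" "\<sigma> a = a'" "\<sigma> b = b'"
    using bij_betw_two_points[of a "{..<n}" b a' b'] ab ab' by auto
  then obtain \<alpha> where \<alpha>: "\<alpha> \<in> iso G G" "\<forall>i<n. \<alpha> (h i) = h (\<sigma> i)"
    using permutation_iso by blast
  have "\<alpha> ` h ` {..<n} = h ` \<sigma> ` {..<n}"
    unfolding image_image using \<alpha>(2) by (intro image_cong) auto
  also have "\<sigma> ` {..<n} = {..<n}"
    using \<sigma>(1) by (simp add: bij_betw_def)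
  finally have \<alpha>_aut: "\<alpha> \<in> graph_aut (cayley_graph G (h ` {..<n}))"
    by (rule cayley.iso_in_graph_aut[OF \<alpha>(1)])
  define f where "f = (\<lambda>x. x \<otimes> v') \<circ> \<alpha> \<circ> (\<lambda>x. x \<otimes> inv v)"
  have "f \<in> graph_aut (cayley_graph G (h ` {..<n}))"
    unfolding f_def using c \<alpha>_aut
    by (intro graph_aut_comp cayley.right_mult_in_graph_aut) simp_all
  moreover have "f (h i \<otimes> v) = h (\<sigma> i) \<otimes> v'" if "i < n" for i
    using that c \<alpha> by (simp add: f_def m_assoc iso_def hom_mult)
  moreover have "f v = v'"
    using c \<alpha>(1) hom_one[of \<alpha> G G] by (simp add: f_def iso_def)
  ultimately show "\<exists>f\<in>graph_aut (cayley_graph G (h ` {..<n})). f u = u' \<and> f v = v' \<and> f w = w'"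
    using ab ab' \<sigma> by auto
qed

lemma regular_normal_quotient:
  "regular_of_valency (normal_quotient (cayley_graph G (h ` {..<n})) (right_mult_perms G Z)) n"
proof -
  have "group (G Mod Z)"
    by (rule normal.factorgroup_is_group[OF normal_Z])
  then interpret Q: involutive_cayley "G Mod Z" "(\<lambda>i. Z #> h i) ` {..<n}"
  proof (rule involutive_cayley.intro, intro involutive_cayley_axioms.intro)
    show "(\<lambda>i. Z #> h i) ` {..<n} \<subseteq> carrier (G Mod Z)"
      by (auto intro: Z_coset_carrier)
    fix t assume "t \<in> (\<lambda>i. Z #> h i) ` {..<n}"
    then show "t \<otimes>\<^bsub>G Mod Z\<^esub> t = \<one>\<^bsub>G Mod Z\<^esub>"
      using subgroup.subset[OF subgroup_Z] by (auto simp: Z_coset_mult gen_involutive)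
  qed
  have "inj_on (\<lambda>i. Z #> h i) {..<n}"
  proof (rule inj_onI)
    fix i j assume i: "i \<in> {..<n}" and j: "j \<in> {..<n}" and eq: "Z #> h i = Z #> h j"
    then have "h i \<in> {h j, z \<otimes> h j}"
      using rcos_self[OF _ subgroup_Z, of "h i"] by (simp add: r_coset_Z)
    moreover have "normal_form ({j}, True) = z \<otimes> h j"
      using j by (simp add: normal_form_def z_sign_def monomial_singleton)
    ultimately have "normal_form ({i}, False) \<in> {normal_form ({j}, False), normal_form ({j}, True)}"
      using i j by (simp add: normal_form_gen)
    then show "i = j"
      using i j normal_form_inj by (auto dest: inj_onD)
  qed
  then show ?thesis
    using Q.regular by (simp add: normal_quotient_right_mult_Z card_image)
qed

end

theorem theorem4p3:
  fixes G :: "('a, 'b) monoid_scheme" and r :: nat and z :: 'a and g :: "nat \<Rightarrow> 'a"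
  assumes "group G"
    and "r \<ge> 1"
    and "finite (carrier G)"
    and "card (carrier G) = 2 ^ (2 * r + 1)"
    and "group_center G = {\<one>\<^bsub>G\<^esub>, z}" and "z \<noteq> \<one>\<^bsub>G\<^esub>"
    and "G Mod (group_center G) \<cong> product_group {..<2 * r} (\<lambda>_. integer_mod_group 2)"
    and "\<And>i. i < 2 * r \<Longrightarrow> g i \<in> carrier G"
    \<comment> \<open>Z g_1, ..., Z g_2r is a basis of G/Z (spanning and linearly independent)\<close>
    and "generate (G Mod (group_center G)) ((\<lambda>i. group_center G #>\<^bsub>G\<^esub> g i) ` {..<2 * r})
           = carrier (G Mod (group_center G))"
    and "\<And>I. I \<subseteq> {..<2 * r} \<Longrightarrow>
           finprod (G Mod (group_center G)) (\<lambda>i. group_center G #>\<^bsub>G\<^esub> g i) I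
             = \<one>\<^bsub>G Mod (group_center G)\<^esub> \<Longrightarrow> I = {}"
    \<comment> \<open>symmetric basis: Q(Z g_i) = g_i^2 = 1, B(Z g_i, Z g_j) = [g_i, g_j] = z for i \<noteq> j\<close>
    and "\<And>i. i < 2 * r \<Longrightarrow> g i \<otimes>\<^bsub>G\<^esub> g i = \<one>\<^bsub>G\<^esub>"
    and "\<And>i j. i < 2 * r \<Longrightarrow> j < 2 * r \<Longrightarrow> i \<noteq> j \<Longrightarrow> commutator G (g i) (g j) = z"
  shows "two_arc_transitive (cayley_graph G (g ` {..<2 * r}))
    \<and> right_mult_perms G (group_center G) \<subseteq> graph_aut (cayley_graph G (g ` {..<2 * r}))
    \<and> graph_iso
        (normal_quotient (cayley_graph G (g ` {..<2 * r})) (right_mult_perms G (group_center G)))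
        (cayley_graph (G Mod (group_center G))
           ((\<lambda>i. group_center G #>\<^bsub>G\<^esub> g i) ` {..<2 * r}))
    \<and> regular_of_valency (cayley_graph G (g ` {..<2 * r})) (2 * r)
    \<and> regular_of_valency
        (normal_quotient (cayley_graph G (g ` {..<2 * r})) (right_mult_perms G (group_center G)))
        (2 * r)"
proof -
  interpret group G
    by (fact assms(1))
  have center: "group_center G = {\<one>\<^bsub>G\<^esub>, z}"
    by (fact assms(5))
  interpret anticommuting_involutions G z g "2 * r"
    by (rule anticommuting_involutionsI[OF assms(5,6,8,11,12)])
  have "comm_group (G Mod Z)"
  proof (rule comm_group.iso_imp_comm_group)
    show "comm_group (product_group {..<2 * r} (\<lambda>_. integer_mod_group 2))"
      by (simp add: comm_group_product_group)
    show "product_group {..<2 * r} (\<lambda>_. integer_mod_group 2) \<cong> G Mod Z"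
      using group.iso_sym[OF normal.factorgroup_is_group[OF normal_Z]] assms(7) center by simp
    show "monoid (G Mod Z)"
      using group.is_monoid[OF normal.factorgroup_is_group[OF normal_Z]] .
  qed
  then interpret anticommuting_basis G z g "2 * r"
    using assms(3,4,6,10) center by (intro anticommuting_basisI) auto
  show ?thesis
    using two_arc_transitive_cayley right_mult_perms_Z_aut regular_cayley regular_normal_quotient
      normal_quotient_right_mult_Z graph_iso_refl center
    by simp
qed

end
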